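(* Define the set of dominant eigenvalues of $J_T$ as $\Lambda_D = \{\lambda_i[J_T] \mid \Re(\lambda_i[W_{\mathrm{out}}W_{\mathrm{in}}])>0\}$. If $\Lambda_D\neq\emptyset$, then the trained reservoir admits a $|\Lambda_D|$-dominant subspace with rate $\lambda = 1-\omega-\varepsilon$, where $0\le\varepsilon<\Re(\mu_{\min})$ and $\mu_{\min}$ is the eigenvalue of $W_{\mathrm{out}}W_{\mathrm{in}}$ with smallest positive real part. Furthermore, $|\Lambda_D|\le d$.
   Context: Consider the untrained linear diagonal continuous-time reservoir $\dot{r}(t) = (-1 + \omega) r(t) + W_{\mathrm{in}} u(t) + \sigma_b \mathbf{1}_n$, with $r(t)\in\mathbb{R}^n$, $u(t)\in\mathbb{R}^d$, $d<n$, $W_{\mathrm{in}}\in\mathbb{R}^{n\times d}$ of full column rank, $\mathbf{1}_n\notin\operatorname{Im}W_{\mathrm{in}}$, $\omega<1$, $\sigma_b\in\mathbb{R}$. It is trained from $r(0)=0$ on generic, informative data: snapshots at equally spaced times form $U\in\mathbb{R}^{d\times m}$ (full row rank) and $R\in\mathbb{R}^{n\times m}$ (full row rank), and $W_{\mathrm{out}} = UR^{\dagger}$ (least squares; $\dagger$ the Moore–Penrose pseudoinverse). The trained closed-loop system is $\dot r = J_T r + \sigma_b\mathbf{1}_n$ with $J_T = (-1+\omega)I + W_{\mathrm{in}}W_{\mathrm{out}}$, assumed diagonalizable and invertible. Then $J_T$ has $n-\operatorname{rank}(W_{\mathrm{out}}W_{\mathrm{in}})\ge n-d$ eigenvalues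 equal to $-1+\omega$ and its remaining (shifted) eigenvalues are $-1+\omega+\lambda_i[W_{\mathrm{out}}W_{\mathrm{in}}]$ for the nonzero eigenvalues of $W_{\mathrm{out}}W_{\mathrm{in}}$. $p$-dominance: a linear system $\dot x = Ax$ is $p$-dominant with rate $\lambda\ge0$ if there is a symmetric matrix $P$ with inertia $(p,0,n-p)$ ($p$ negative, $0$ zero, $n-p$ positive eigenvalues) such that $A^\top P + PA \le -2\lambda P - \varepsilon I$ for some $\varepsilon\ge0$; for $\varepsilon>0$ this is equivalent to $A+\lambda I$ having $p$ eigenvalues with strictly positive real part and $n-p$ with strictly negative real part. *)

theory Defs
  imports "Jordan_Normal_Form.Jordan_Normal_Form" "Jordan_Normal_Form.DL_Rank"
begin

text \<open>Complexification of a real matrix (eigenvalues are taken over the complex numbers).\<close>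
definition cmat :: "real mat \<Rightarrow> complex mat" where
  "cmat A = map_mat complex_of_real A"

definition alg_mult :: "real mat \<Rightarrow> complex \<Rightarrow> nat" where
  "alg_mult A \<mu> = Polynomial.order \<mu> (char_poly (cmat A))"

definition pos_eigs :: "real mat \<Rightarrow> complex set" where
  "pos_eigs M = {\<mu>. eigenvalue (cmat M) \<mu> \<and> 0 < Re \<mu>}"

text \<open>The dominant eigenvalues of J_T = (-1+omega) I + W_in W_out, as a multiset
  (with algebraic multiplicity): lambda_i[J_T] = -1 + omega + lambda_i[W_out W_in]
  for those eigenvalues of M = W_out W_in with positive real part.\<close>
definition Lambda_D :: "real \<Rightarrow> real mat \<Rightarrow> complex multiset" where
  "Lambda_D \<omega> M = image_mset (\<lambda>\<mu>. complex_of_real (-1 + \<omega>) + \<mu>)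
      (\<Sum>\<mu>\<in>pos_eigs M. replicate_mset (alg_mult M \<mu>) \<mu>)"

definition inertia :: "real mat \<Rightarrow> nat \<times> nat \<times> nat" where
  "inertia P =
     ((\<Sum>x\<in>{x. eigenvalue P x \<and> x < 0}. Polynomial.order x (char_poly P)),
      (\<Sum>x\<in>{x. eigenvalue P x \<and> x = 0}. Polynomial.order x (char_poly P)),
      (\<Sum>x\<in>{x. eigenvalue P x \<and> 0 < x}. Polynomial.order x (char_poly P)))"

definition loewner_le :: "nat \<Rightarrow> real mat \<Rightarrow> real mat \<Rightarrow> bool" where
  "loewner_le n M N \<longleftrightarrow> M \<in> carrier_mat n n \<and> N \<in> carrier_mat n n \<and>
     (\<forall>x\<in>carrier_vec n. x \<bullet> (M *\<^sub>v x) \<le> x \<bullet> (N *\<^sub>v x))"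

definition p_dominant :: "nat \<Rightarrow> real mat \<Rightarrow> real \<Rightarrow> nat \<Rightarrow> bool" where
  "p_dominant n A rate p \<longleftrightarrow>
     (\<exists>P \<in> carrier_mat n n. transpose_mat P = P \<and> inertia P = (p, 0, n - p) \<and>
        (\<exists>\<epsilon>\<ge>0. loewner_le n (transpose_mat A * P + P * A)
                              ((- 2 * rate) \<cdot>\<^sub>m P - \<epsilon> \<cdot>\<^sub>m 1\<^sub>m n)))"

definition is_pinv :: "real mat \<Rightarrow> real mat \<Rightarrow> bool" where
  "is_pinv A X \<longleftrightarrow> X \<in> carrier_mat (dim_col A) (dim_row A) \<and>
     A * X * A = A \<and> X * A * X = X \<and>
     transpose_mat (A * X) = A * X \<and> transpose_mat (X * A) = X * A"

definition pinv :: "real mat \<Rightarrow> real mat" where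
  "pinv A = (THE X. is_pinv A X)"

definition diagonalizable :: "real mat \<Rightarrow> bool" where
  "diagonalizable A \<longleftrightarrow> (\<exists>D. diagonal_mat D \<and> similar_mat (cmat A) D)"

end

theory Submission
  imports Defs "Jordan_Normal_Form.Schur_Decomposition"
begin

text \<open>Write \<open>J\<^sub>T = (\<omega> - 1) I + K\<close> with \<open>K = W\<^sub>i\<^sub>n W\<^sub>o\<^sub>u\<^sub>t\<close>. Since \<open>J\<^sub>T\<close> is diagonalizable,
  \<open>K = S diag(\<kappa>) Y\<close> over \<open>\<complex>\<close>, the rows of \<open>Y\<close> being left eigenvectors. The certificate is
  \<open>P = Re (Y\<^sup>* G Y)\<close> with \<open>G = diag(g)\<close>, where \<open>g\<^sub>k = -1\<close> if \<open>Re \<kappa>\<^sub>k > 0\<close> and \<open>g\<^sub>k = 1\<close>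
  otherwise: then \<open>x\<^sup>T P (K - \<epsilon>) x = \<Sum>\<^sub>k g\<^sub>k (Re \<kappa>\<^sub>k - \<epsilon>) |(Y x)\<^sub>k|\<^sup>2 \<le> 0\<close>, which is the
  dominance inequality with rate \<open>1 - \<omega> - \<epsilon>\<close>. The Hermitian form of \<open>P\<close> is the mean of the
  forms of \<open>G\<close> in the coordinates \<open>Y z\<close> and \<open>conj Y z\<close>; as \<open>K\<close> is real, \<open>conj Y z\<close> vanishes on a
  sign class of \<open>g\<close> whenever \<open>Y z\<close> does. Hence \<open>P\<close> is negative definite on a subspace of
  dimension \<open>p = #{k. Re \<kappa>\<^sub>k > 0}\<close> and positive definite on one of dimension \<open>n - p\<close>, so its
  inertia is \<open>(p, 0, n - p)\<close> by Sylvester's law of inertia. Finally \<open>X\<^sup>d \<chi>\<^sub>K = X\<^sup>n \<chi>\<^sub>M\<close> for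
  \<open>M = W\<^sub>o\<^sub>u\<^sub>t W\<^sub>i\<^sub>n\<close>, so \<open>K\<close> and \<open>M\<close> share their nonzero eigenvalues with multiplicities, and
  \<open>p = |\<Lambda>\<^sub>D| \<le> d\<close>.\<close>

section \<open>Characteristic polynomials and algebraic multiplicities\<close>

lemma order_prod_linear_factors:
  fixes as :: "'a::idom list"
  shows "Polynomial.order x (\<Prod>a\<leftarrow>as. [:- a, 1:]) = count_list as x"
proof -
  have "Polynomial.order x (\<Prod>a\<leftarrow>as. [:- a, 1:]) = (\<Sum>a\<leftarrow>as. Polynomial.order x [:- a, 1:])"
    by (subst order_prod_list) (auto simp: o_def)
  also have "\<dots> = count_list as x"
    by (induction as) (auto simp: order_linear')
  finally show ?thesis .
qed

lemma sum_count_list_eq_length_filter: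
  "(\<Sum>x\<in>{x. x \<in> set as \<and> Pr x}. count_list as x) = length (filter Pr as)"
proof -
  have "(\<Sum>x\<in>{x. x \<in> set as \<and> Pr x}. count_list as x)
      = (\<Sum>x\<in>set (filter Pr as). count_list (filter Pr as) x)"
  proof (rule sum.cong)
    show "count_list as x = count_list (filter Pr as) x" if "x \<in> set (filter Pr as)" for x
    proof -
      have "Pr x" using that by simp
      then show ?thesis by (induction as) auto
    qed
  qed auto
  also have "\<dots> = length (filter Pr as)" by (rule sum_count_set) auto
  finally show ?thesis .
qed

lemma length_filter_upt_eq_card: "length (filter P [0..<n]) = card {k. k < n \<and> P k}"
proof -
  have "{i. i < length [0..<n] \<and> P ([0..<n] ! i)} = {k. k < n \<and> P k}" by auto
  then show ?thesis by (simp only: length_filter_conv_card)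
qed

lemma char_poly_mat_diag:
  "char_poly (mat_diag n f) = (\<Prod>a\<leftarrow>map f [0..<n]. [:- a, 1:])"
proof -
  have "char_poly (mat_diag n f) = (\<Prod>a\<leftarrow>diag_mat (mat_diag n f). [:- a, 1:])"
    by (rule char_poly_upper_triangular[OF mat_diag_dim]) (simp add: upper_triangular_def mat_diag_def)
  moreover have "diag_mat (mat_diag n f) = map f [0..<n]"
    by (rule nth_equalityI) (auto simp: diag_mat_def mat_diag_def)
  ultimately show ?thesis by simp
qed

lemma char_poly_matrix_mult:
  fixes A :: "'a::field mat"
  assumes "A \<in> carrier_mat n d" "B \<in> carrier_mat d n"
  shows "char_poly_matrix (A * B) =
    [:0, 1:] \<cdot>\<^sub>m 1\<^sub>m n - map_mat (\<lambda>a. [:a:]) A * map_mat (\<lambda>a. [:a:]) B"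
proof -
  have "map_mat (\<lambda>a. [:a:]) (A * B) = map_mat (\<lambda>a. [:a:]) A * map_mat (\<lambda>a. [:a:]) B"
    using assms by (rule map_poly_mult(1))
  moreover have "map_mat (\<lambda>a. [:- a:]) (A * B) = - map_mat (\<lambda>a. [:a:]) (A * B)"
    by (intro eq_matI) auto
  ultimately show ?thesis
    unfolding char_poly_matrix_def using assms by (intro eq_matI) auto
qed

lemma sylvester_char_poly:
  fixes A :: "'a::field mat"
  assumes A: "A \<in> carrier_mat n d" and B: "B \<in> carrier_mat d n"
  shows "[:0, 1:] ^ d * char_poly (A * B) = [:0, 1:] ^ n * char_poly (B * A)"
proof -
  define X :: "'a poly" where "X = [:0, 1:]"
  define Ap where "Ap = map_mat (\<lambda>a. [:a:]) A"
  define Bp where "Bp = map_mat (\<lambda>a. [:a:]) B"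
  have Ap: "Ap \<in> carrier_mat n d" and Bp: "Bp \<in> carrier_mat d n"
    using A B by (auto simp: Ap_def Bp_def)
  have cpAB: "char_poly (A * B) = det (X \<cdot>\<^sub>m 1\<^sub>m n - Ap * Bp)"
    unfolding char_poly_def char_poly_matrix_mult[OF A B] X_def Ap_def Bp_def ..
  have cpBA: "char_poly (B * A) = det (X \<cdot>\<^sub>m 1\<^sub>m d - Bp * Ap)"
    unfolding char_poly_def char_poly_matrix_mult[OF B A] X_def Ap_def Bp_def ..
  define M where "M = four_block_mat (X \<cdot>\<^sub>m 1\<^sub>m n) Ap Bp (1\<^sub>m d)"
  define L1 where "L1 = four_block_mat (1\<^sub>m n) (- Ap) (0\<^sub>m d n) (X \<cdot>\<^sub>m 1\<^sub>m d)"
  define L2 where "L2 = four_block_mat (1\<^sub>m n) (0\<^sub>m n d) (- Bp) (X \<cdot>\<^sub>m 1\<^sub>m d)"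
  have M: "M \<in> carrier_mat (n + d) (n + d)"
    and L1: "L1 \<in> carrier_mat (n + d) (n + d)" and L2: "L2 \<in> carrier_mat (n + d) (n + d)"
    unfolding M_def L1_def L2_def using Ap Bp by auto
  have det_L1: "det L1 = X ^ d" unfolding L1_def
    by (subst det_four_block_mat_lower_left_zero[of _ n _ d]) (use Ap in auto)
  have det_L2: "det L2 = X ^ d" unfolding L2_def
    by (subst det_four_block_mat_upper_right_zero[of _ n _ d]) (use Bp in auto)
  have L1M: "L1 * M = four_block_mat (X \<cdot>\<^sub>m 1\<^sub>m n - Ap * Bp) (0\<^sub>m n d) (X \<cdot>\<^sub>m Bp) (X \<cdot>\<^sub>m 1\<^sub>m d)"
    unfolding L1_def M_def
    by (subst mult_four_block_mat[of _ n n _ d _ d _ _ n _ d])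
      (use Ap Bp in \<open>auto simp: mult_smult_distrib mult_smult_assoc_mat\<close>)
  have L2M: "L2 * M = four_block_mat (X \<cdot>\<^sub>m 1\<^sub>m n) Ap (0\<^sub>m d n) (X \<cdot>\<^sub>m 1\<^sub>m d - Bp * Ap)"
    unfolding L2_def M_def
    by (subst mult_four_block_mat[of _ n n _ d _ d _ _ n _ d])
      (use Ap Bp in \<open>auto simp: mult_smult_distrib mult_smult_assoc_mat\<close>)
  have "det L1 * det M = char_poly (A * B) * X ^ d"
    unfolding det_mult[OF L1 M, symmetric] L1M cpAB
    by (subst det_four_block_mat_upper_right_zero[of _ n _ d]) (use Ap Bp in auto)
  then have det_M: "det M = char_poly (A * B)" by (simp add: det_L1 X_def mult.commute)
  have "det L2 * det M = X ^ n * char_poly (B * A)"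
    unfolding det_mult[OF L2 M, symmetric] L2M cpBA
    by (subst det_four_block_mat_lower_left_zero[of _ n _ d]) (use Ap Bp in auto)
  then show ?thesis unfolding det_M det_L2 X_def .
qed

lemma order_char_poly_mult_commute:
  fixes A :: "'a::field mat"
  assumes "A \<in> carrier_mat n d" "B \<in> carrier_mat d n" and "\<mu> \<noteq> 0"
  shows "Polynomial.order \<mu> (char_poly (A * B)) = Polynomial.order \<mu> (char_poly (B * A))"
proof -
  have order_X_pow: "Polynomial.order \<mu> ([:0, 1:] ^ k * char_poly C) = Polynomial.order \<mu> (char_poly C)"
    if "C \<in> carrier_mat m m" for C :: "'a mat" and k m
  proof -
    have "char_poly C \<noteq> 0" using degree_monic_char_poly[OF that] by auto
    then have "Polynomial.order \<mu> ([:0, 1:] ^ k * char_poly C)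
        = Polynomial.order \<mu> ([:0, 1:] ^ k) + Polynomial.order \<mu> (char_poly C)"
      by (intro order_mult) simp
    moreover have "Polynomial.order \<mu> ([:0, 1:] ^ k) = 0" by (rule order_0I) (use assms(3) in simp)
    ultimately show ?thesis by simp
  qed
  have "A * B \<in> carrier_mat n n" "B * A \<in> carrier_mat d d" using assms(1,2) by auto
  from arg_cong[OF sylvester_char_poly[OF assms(1,2)], of "Polynomial.order \<mu>"]
  show ?thesis unfolding order_X_pow[OF \<open>A * B \<in> _\<close>] order_X_pow[OF \<open>B * A \<in> _\<close>] .
qed

lemma eigenvalue_cmat_iff_alg_mult:
  assumes "M \<in> carrier_mat d d"
  shows "eigenvalue (cmat M) \<mu> \<longleftrightarrow> 0 < alg_mult M \<mu>"
proof -
  have M: "cmat M \<in> carrier_mat d d" using assms by (simp add: cmat_def)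
  have "char_poly (cmat M) \<noteq> 0" using degree_monic_char_poly[OF M] by auto
  then show ?thesis
    unfolding eigenvalue_root_char_poly[OF M] alg_mult_def by (simp add: order_root)
qed

lemma sum_alg_mult_pos_eigs:
  assumes M: "M \<in> carrier_mat d d"
    and mult: "\<And>\<mu>. \<mu> \<noteq> 0 \<Longrightarrow> alg_mult M \<mu> = count_list as \<mu>"
  shows "(\<Sum>\<mu>\<in>pos_eigs M. alg_mult M \<mu>) = length (filter (\<lambda>\<mu>. 0 < Re \<mu>) as)"
proof -
  have "0 < alg_mult M \<mu> \<longleftrightarrow> \<mu> \<in> set as" if "0 < Re \<mu>" for \<mu>
  proof -
    have "\<mu> \<noteq> 0" using that by auto
    then show ?thesis by (simp add: mult count_list_0_iff flip: neq0_conv)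
  qed
  then have "pos_eigs M = {\<mu>. \<mu> \<in> set as \<and> 0 < Re \<mu>}"
    unfolding pos_eigs_def eigenvalue_cmat_iff_alg_mult[OF M] by blast
  then have "(\<Sum>\<mu>\<in>pos_eigs M. alg_mult M \<mu>) = (\<Sum>\<mu>\<in>{\<mu>. \<mu> \<in> set as \<and> 0 < Re \<mu>}. count_list as \<mu>)"
    by (intro sum.cong) (auto intro: mult)
  then show ?thesis by (simp only: sum_count_list_eq_length_filter)
qed

lemma sum_alg_mult_pos_eigs_le:
  assumes "M \<in> carrier_mat d d"
  shows "(\<Sum>\<mu>\<in>pos_eigs M. alg_mult M \<mu>) \<le> d"
proof -
  have "cmat M \<in> carrier_mat d d" using assms by (simp add: cmat_def)
  then obtain ms where "char_poly (cmat M) = (\<Prod>a\<leftarrow>ms. [:- a, 1:])" and "length ms = d"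
    using char_poly_factorized by blast
  then show ?thesis
    using sum_alg_mult_pos_eigs[OF assms, of ms] length_filter_le[of _ ms]
    by (simp add: alg_mult_def order_prod_linear_factors)
qed

section \<open>Real symmetric matrices\<close>

definition herm_form :: "real mat \<Rightarrow> complex vec \<Rightarrow> complex" where
  "herm_form P z = (\<Sum>i<dim_vec z. \<Sum>j<dim_vec z. cnj (z $ i) * of_real (P $$ (i, j)) * z $ j)"

lemma cnj_mult_self: "cnj z * z = of_real ((cmod z)\<^sup>2)"
  by (subst complex_norm_square) (simp add: mult.commute)

lemma cnj_herm_form:
  assumes "P \<in> carrier_mat n n" "transpose_mat P = P" "z \<in> carrier_vec n"
  shows "cnj (herm_form P z) = herm_form P z"
proof -
  have dz: "dim_vec z = n" using assms(3) by simp
  have "cnj (herm_form P z) = (\<Sum>i<n. \<Sum>j<n. z $ i * of_real (P $$ (i, j)) * cnj (z $ j))"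
    by (simp add: herm_form_def dz)
  also have "\<dots> = (\<Sum>j<n. \<Sum>i<n. z $ i * of_real (P $$ (i, j)) * cnj (z $ j))"
    by (rule sum.swap)
  also have "\<dots> = herm_form P z"
    unfolding herm_form_def dz
  proof (intro sum.cong refl)
    fix i j assume "i \<in> {..<n}" "j \<in> {..<n}"
    then have "P $$ (j, i) = P $$ (i, j)"
      using assms by (metis carrier_matD index_transpose_mat(1) lessThan_iff)
    then show "z $ j * of_real (P $$ (j, i)) * cnj (z $ i) = cnj (z $ i) * of_real (P $$ (i, j)) * z $ j"
      by (simp add: mult_ac)
  qed
  finally show ?thesis .
qed

lemma herm_form_eigenvector:
  assumes P: "P \<in> carrier_mat n n" and z: "z \<in> carrier_vec n"
    and eig: "cmat P *\<^sub>v z = \<mu> \<cdot>\<^sub>v z"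
  shows "herm_form P z = \<mu> * of_real (\<Sum>i<n. (cmod (z $ i))\<^sup>2)"
proof -
  have "herm_form P z = (\<Sum>i<n. cnj (z $ i) * (cmat P *\<^sub>v z) $ i)"
    using P z by (simp add: herm_form_def cmat_def scalar_prod_def sum_distrib_left mult_ac
        lessThan_atLeast0)
  also have "\<dots> = \<mu> * (\<Sum>i<n. cnj (z $ i) * z $ i)"
    unfolding eig using z by (simp add: sum_distrib_left mult_ac)
  also have "(\<Sum>i<n. cnj (z $ i) * z $ i) = of_real (\<Sum>i<n. (cmod (z $ i))\<^sup>2)"
    by (simp only: cnj_mult_self of_real_sum)
  finally show ?thesis .
qed

lemma real_symmetric_unit_eigenvector:
  fixes A :: "real mat"
  assumes A: "A \<in> carrier_mat n n" and sym: "transpose_mat A = A" and "0 < n"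
  shows "\<exists>e u. u \<in> carrier_vec n \<and> u \<bullet> u = 1 \<and> A *\<^sub>v u = e \<cdot>\<^sub>v u"
proof -
  have C: "cmat A \<in> carrier_mat n n" using A by (simp add: cmat_def)
  obtain as where cp: "char_poly (cmat A) = (\<Prod>a\<leftarrow>as. [:- a, 1:])" and "length as = n"
    using char_poly_factorized[OF C] by blast
  then obtain \<mu> where "\<mu> \<in> set as" using \<open>0 < n\<close> by (cases as) auto
  then have root: "poly (char_poly (cmat A)) \<mu> = 0" unfolding cp by (simp add: poly_prod_list_zero_iff)
  then obtain w where "eigenvector (cmat A) w \<mu>"
    using eigenvalue_root_char_poly[OF C] unfolding eigenvalue_def by blast
  then have w: "w \<in> carrier_vec n" "w \<noteq> 0\<^sub>v n" "cmat A *\<^sub>v w = \<mu> \<cdot>\<^sub>v w"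
    unfolding eigenvector_def using C by auto
  have "\<mu> \<in> \<real>"
  proof -
    define N where "N = (\<Sum>i<n. (cmod (w $ i))\<^sup>2)"
    obtain i where "i < n" "w $ i \<noteq> 0" using w(1,2) by (metis eq_vecI carrier_vecD index_zero_vec)
    then have "0 < N" unfolding N_def by (intro sum_pos2[of _ i]) auto
    have "cnj (\<mu> * of_real N) = \<mu> * of_real N"
      using cnj_herm_form[OF A sym w(1)] herm_form_eigenvector[OF A w(1,3)] by (simp add: N_def)
    then have "cnj \<mu> = \<mu>" using \<open>0 < N\<close> by simp
    then show ?thesis by (simp add: Reals_cnj_iff)
  qed
  then have "\<mu> = of_real (Re \<mu>)" by (simp add: complex_is_Real_iff complex_eq_iff)
  moreover have "char_poly (cmat A) = map_poly of_real (char_poly A)"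
    unfolding cmat_def by (rule of_real_hom.char_poly_hom[OF A])
  ultimately have "poly (char_poly A) (Re \<mu>) = 0"
    using root by (metis of_real_eq_0_iff of_real_hom.poly_map_poly)
  then obtain v where "eigenvector A v (Re \<mu>)"
    using eigenvalue_root_char_poly[OF A] unfolding eigenvalue_def by blast
  then have v: "v \<in> carrier_vec n" "v \<noteq> 0\<^sub>v n" "A *\<^sub>v v = Re \<mu> \<cdot>\<^sub>v v"
    unfolding eigenvector_def using A by auto
  then have "0 < v \<bullet> v" using conjugate_square_greater_0_vec[OF v(1)] by simp
  then show ?thesis using v
    by (intro exI[of _ "Re \<mu>"] exI[of _ "(1 / sqrt (v \<bullet> v)) \<cdot>\<^sub>v v"])
      (auto simp: mult_mat_vec[OF A] smult_smult_assoc mult.commute simp flip: power2_eq_square)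
qed

definition orthonormal_mat :: "nat \<Rightarrow> real mat \<Rightarrow> bool" where
  "orthonormal_mat n Q \<longleftrightarrow>
     Q \<in> carrier_mat n n \<and> transpose_mat Q * Q = 1\<^sub>m n \<and> Q * transpose_mat Q = 1\<^sub>m n"

lemma orthonormal_mat_mult:
  assumes "orthonormal_mat n U" "orthonormal_mat n F"
  shows "orthonormal_mat n (U * F)"
proof -
  have U: "U \<in> carrier_mat n n" and F: "F \<in> carrier_mat n n" using assms by (auto simp: orthonormal_mat_def)
  have "transpose_mat (U * F) * (U * F) = transpose_mat F * (transpose_mat U * U) * F"
    using U F by (simp add: transpose_mult[OF U F] assoc_mult_mat[of _ n n _ n _ n])
  moreover have "U * F * transpose_mat (U * F) = U * (F * transpose_mat F) * transpose_mat U"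
    using U F by (simp add: transpose_mult[OF U F] assoc_mult_mat[of _ n n _ n _ n])
  ultimately show ?thesis using assms U F by (simp add: orthonormal_mat_def)
qed

lemma orthonormal_mat_four_block:
  assumes "orthonormal_mat m Q"
  shows "orthonormal_mat (Suc m) (four_block_mat (1\<^sub>m 1) (0\<^sub>m 1 m) (0\<^sub>m m 1) Q)"
proof -
  have Q: "Q \<in> carrier_mat m m" using assms by (simp add: orthonormal_mat_def)
  have "transpose_mat (four_block_mat (1\<^sub>m 1) (0\<^sub>m 1 m) (0\<^sub>m m 1) Q)
      = four_block_mat (1\<^sub>m 1) (0\<^sub>m 1 m) (0\<^sub>m m 1) (transpose_mat Q)"
    using Q by (subst transpose_four_block_mat) auto
  then show ?thesis using assms Q unfolding orthonormal_mat_def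
    by (simp, subst (1 2) mult_four_block_mat[of _ 1 1 _ m _ m _ _ 1 _ m]) auto
qed

lemma orthonormal_mat_of_cols:
  assumes us: "set us \<subseteq> carrier_vec n" "length us = n"
    and ortho: "\<And>i j. i < n \<Longrightarrow> j < n \<Longrightarrow> us ! i \<bullet> us ! j = (if i = j then 1 else 0)"
  shows "orthonormal_mat n (mat_of_cols n us)"
proof -
  let ?U = "mat_of_cols n us"
  have U: "?U \<in> carrier_mat n n" using us(2) by (simp add: mat_of_cols_def)
  have col: "col ?U i = us ! i" if "i < n" for i
    using us that by (intro col_mat_of_cols) auto
  have UTU: "transpose_mat ?U * ?U = 1\<^sub>m n"
    by (rule eq_matI) (use U in \<open>auto simp: col ortho\<close>)
  moreover have "?U * transpose_mat ?U = 1\<^sub>m n"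
    by (rule mat_mult_left_right_inverse[OF _ U UTU]) (use U in simp)
  ultimately show ?thesis using U by (simp add: orthonormal_mat_def)
qed

lemma orthonormal_completion:
  fixes u :: "real vec"
  assumes u: "u \<in> carrier_vec n" and uu: "u \<bullet> u = 1"
  shows "\<exists>U. orthonormal_mat n U \<and> col U 0 = u"
proof -
  interpret cof_vec_space n "TYPE(real)" .
  have u0: "u \<noteq> 0\<^sub>v n" using uu u by auto
  have n: "0 < n"
  proof (rule ccontr)
    assume "\<not> 0 < n"
    then have "u = 0\<^sub>v n" using u by (intro eq_vecI) auto
    with u0 show False ..
  qed
  define b where "b = basis_completion u"
  note b = basis_completion[OF u u0, folded b_def]
  obtain vs where bv: "b = u # vs" using b n by (cases b) auto
  define ws where "ws = gram_schmidt n b"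
  have ws: "set ws \<subseteq> carrier_vec n" "corthogonal ws" "length ws = n"
    using gram_schmidt_result[OF b(2,4,5) ws_def] b by auto
  have ws_in: "ws ! i \<in> carrier_vec n" if "i < n" for i using ws that by auto
  have ws0: "ws ! 0 = u" using gram_schmidt_hd[OF u] ws(3) n unfolding ws_def bv
    by (metis hd_conv_nth list.size(3) not_less0)
  have ws_ortho: "ws ! i \<bullet> ws ! j = 0" if "i < n" "j < n" "i \<noteq> j" for i j
    using corthogonalD[OF ws(2), of i j] that ws(3) by simp
  have ws_pos: "0 < ws ! i \<bullet> ws ! i" if "i < n" for i
  proof -
    have "ws ! i \<noteq> 0\<^sub>v n" using corthogonalD[OF ws(2), of i i] that ws(3) ws_in[OF that] by auto
    then show ?thesis using conjugate_square_greater_0_vec[OF ws_in[OF that]] by simp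
  qed
  define us where "us = map (\<lambda>w. (1 / sqrt (w \<bullet> w)) \<cdot>\<^sub>v w) ws"
  have us_nth: "us ! i = (1 / sqrt (ws ! i \<bullet> ws ! i)) \<cdot>\<^sub>v ws ! i" if "i < n" for i
    unfolding us_def using that ws(3) by simp
  have us: "set us \<subseteq> carrier_vec n" "length us = n" using ws by (auto simp: us_def)
  have "us ! i \<bullet> us ! j = (if i = j then 1 else 0)" if i: "i < n" and j: "j < n" for i j
  proof -
    have "us ! i \<bullet> us ! j = 1 / sqrt (ws ! i \<bullet> ws ! i) * (1 / sqrt (ws ! j \<bullet> ws ! j)) * (ws ! i \<bullet> ws ! j)"
      unfolding us_nth[OF i] us_nth[OF j] using ws_in[OF i] ws_in[OF j] by simp
    then show ?thesis using ws_ortho[OF i j] ws_pos[OF i] by (auto simp flip: power2_eq_square)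
  qed
  moreover have "col (mat_of_cols n us) 0 = u"
    using n us us_nth[OF n] ws0 uu by (subst col_mat_of_cols) auto
  ultimately show ?thesis using orthonormal_mat_of_cols[OF us] by blast
qed

lemma symmetric_deflation:
  fixes A U :: "real mat"
  assumes A: "A \<in> carrier_mat (Suc m) (Suc m)" and sym: "transpose_mat A = A"
    and U: "orthonormal_mat (Suc m) U" and eig: "A *\<^sub>v col U 0 = e \<cdot>\<^sub>v col U 0"
  shows "\<exists>A3 \<in> carrier_mat m m. transpose_mat A3 = A3 \<and>
           transpose_mat U * A * U = four_block_mat (mat 1 1 (\<lambda>_. e)) (0\<^sub>m 1 m) (0\<^sub>m m 1) A3"
proof -
  have U_carrier: "U \<in> carrier_mat (Suc m) (Suc m)" using U by (simp add: orthonormal_mat_def)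
  define A' where "A' = transpose_mat U * A * U"
  have A': "A' \<in> carrier_mat (Suc m) (Suc m)" unfolding A'_def using U_carrier A by auto
  have sym': "transpose_mat A' = A'" unfolding A'_def using U_carrier A sym
    by (simp add: transpose_mult[of _ "Suc m" "Suc m" _ "Suc m"] assoc_mult_mat[of _ "Suc m" "Suc m" _ "Suc m" _ "Suc m"])
  have col0: "A' $$ (i, 0) = (if i = 0 then e else 0)" if i: "i < Suc m" for i
  proof -
    have "col (A * U) 0 = A *\<^sub>v col U 0" using A U_carrier by (intro col_mult2) auto
    then have "A' $$ (i, 0) = col U i \<bullet> (A *\<^sub>v col U 0)"
      unfolding A'_def using U_carrier A i by (simp add: assoc_mult_mat[of _ "Suc m" "Suc m" _ "Suc m" _ "Suc m"])
    also have "\<dots> = e * (transpose_mat U * U) $$ (i, 0)" unfolding eig using U_carrier i by simp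
    finally show ?thesis using U i by (simp add: orthonormal_mat_def)
  qed
  define A3 where "A3 = mat m m (\<lambda>(i, j). A' $$ (Suc i, Suc j))"
  have "transpose_mat A3 = A3"
  proof (rule eq_matI)
    fix i j assume "i < dim_row A3" "j < dim_col A3"
    then show "transpose_mat A3 $$ (i, j) = A3 $$ (i, j)"
      using arg_cong[OF sym', of "\<lambda>M. M $$ (Suc j, Suc i)"] A' by (simp add: A3_def)
  qed (simp_all add: A3_def)
  moreover have "A' = four_block_mat (mat 1 1 (\<lambda>_. e)) (0\<^sub>m 1 m) (0\<^sub>m m 1) A3"
  proof (rule eq_matI)
    fix i j assume "i < dim_row (four_block_mat (mat 1 1 (\<lambda>_. e)) (0\<^sub>m 1 m) (0\<^sub>m m 1) A3)"
      "j < dim_col (four_block_mat (mat 1 1 (\<lambda>_. e)) (0\<^sub>m 1 m) (0\<^sub>m m 1) A3)"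
    then have ij: "i < Suc m" "j < Suc m" by (auto simp: A3_def)
    have row0: "A' $$ (0, j) = (if j = 0 then e else 0)"
      using col0[OF ij(2)] sym' A' ij by (metis carrier_matD index_transpose_mat(1) zero_less_Suc)
    show "A' $$ (i, j) = four_block_mat (mat 1 1 (\<lambda>_. e)) (0\<^sub>m 1 m) (0\<^sub>m m 1) A3 $$ (i, j)"
      using ij col0 row0 by (cases i; cases j) (auto simp: A3_def)
  qed (use A' in \<open>auto simp: A3_def\<close>)
  ultimately show ?thesis unfolding A'_def A3_def by auto
qed

theorem real_symmetric_orthonormal_diagonalization:
  fixes A :: "real mat"
  assumes "A \<in> carrier_mat n n" "transpose_mat A = A"
  shows "\<exists>Q L. orthonormal_mat n Q \<and> L \<in> carrier_mat n n \<and> diagonal_mat L \<and>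
               A = Q * L * transpose_mat Q"
  using assms
proof (induction n arbitrary: A)
  case 0
  then show ?case
    by (intro exI[of _ "1\<^sub>m 0"] exI[of _ A]) (auto simp: orthonormal_mat_def diagonal_mat_def)
next
  case (Suc m)
  note A = Suc.prems(1) and sym = Suc.prems(2)
  obtain e u where u: "u \<in> carrier_vec (Suc m)" "u \<bullet> u = 1" "A *\<^sub>v u = e \<cdot>\<^sub>v u"
    using real_symmetric_unit_eigenvector[OF A sym] by blast
  obtain U where U: "orthonormal_mat (Suc m) U" and U0: "col U 0 = u"
    using orthonormal_completion[OF u(1,2)] by blast
  have U_carrier: "U \<in> carrier_mat (Suc m) (Suc m)" using U by (simp add: orthonormal_mat_def)
  define E where "E = mat 1 1 (\<lambda>_. e)"
  obtain A3 where A3: "A3 \<in> carrier_mat m m" "transpose_mat A3 = A3"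
    and UAU: "transpose_mat U * A * U = four_block_mat E (0\<^sub>m 1 m) (0\<^sub>m m 1) A3"
    using symmetric_deflation[OF A sym U] u(3) unfolding U0 E_def by blast
  obtain Q3 L3 where Q3: "orthonormal_mat m Q3" and L3: "L3 \<in> carrier_mat m m" "diagonal_mat L3"
    and A3_eq: "A3 = Q3 * L3 * transpose_mat Q3"
    using Suc.IH[OF A3] by blast
  have Q3_carrier: "Q3 \<in> carrier_mat m m" using Q3 by (simp add: orthonormal_mat_def)
  define F where "F = four_block_mat (1\<^sub>m 1) (0\<^sub>m 1 m) (0\<^sub>m m 1) Q3"
  define L where "L = four_block_mat E (0\<^sub>m 1 m) (0\<^sub>m m 1) L3"
  have F: "orthonormal_mat (Suc m) F" unfolding F_def by (rule orthonormal_mat_four_block[OF Q3])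
  have F_carrier: "F \<in> carrier_mat (Suc m) (Suc m)" using F by (simp add: orthonormal_mat_def)
  have L: "L \<in> carrier_mat (Suc m) (Suc m)" "diagonal_mat L"
    using L3 unfolding L_def E_def diagonal_mat_def by auto
  have "F * L = four_block_mat E (0\<^sub>m 1 m) (0\<^sub>m m 1) (Q3 * L3)"
    unfolding F_def L_def E_def
    by (subst mult_four_block_mat[of _ 1 1 _ m _ m _ _ 1 _ m]) (use Q3_carrier L3 in auto)
  then have "F * L * transpose_mat F = four_block_mat E (0\<^sub>m 1 m) (0\<^sub>m m 1) A3"
    unfolding F_def A3_eq E_def using Q3_carrier L3
    by (subst transpose_four_block_mat, auto, subst mult_four_block_mat[of _ 1 1 _ m _ m _ _ 1 _ m]) auto
  then have FLF: "F * L * transpose_mat F = transpose_mat U * A * U" unfolding UAU .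
  have "U * F * L * transpose_mat (U * F) = U * (F * L * transpose_mat F) * transpose_mat U"
    using U_carrier F_carrier L
    by (simp add: transpose_mult[OF U_carrier F_carrier] assoc_mult_mat[of _ "Suc m" "Suc m" _ "Suc m" _ "Suc m"])
  also have "\<dots> = (U * transpose_mat U) * A * (U * transpose_mat U)"
    unfolding FLF using U_carrier A by (simp add: assoc_mult_mat[of _ "Suc m" "Suc m" _ "Suc m" _ "Suc m"])
  also have "\<dots> = A" using U A by (simp add: orthonormal_mat_def)
  finally show ?case using orthonormal_mat_mult[OF U F] L by metis
qed

section \<open>Inertia\<close>

lemma exists_nonzero_orthogonal_vec:
  fixes fs :: "'a::field vec list"
  assumes len: "length fs < n" and fs: "set fs \<subseteq> carrier_vec n"
  shows "\<exists>z \<in> carrier_vec n. z \<noteq> 0\<^sub>v n \<and> (\<forall>f\<in>set fs. f \<bullet> z = 0)"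
proof -
  define k where "k = length fs"
  define c where "c = (\<lambda>i. if i < k then fs ! i else 0\<^sub>v n)"
  define A where "A = mat\<^sub>r n n (\<lambda>i. if i = k then 0\<^sub>v n else c i)"
  have c: "c \<in> {0..<n} \<rightarrow> carrier_vec n" unfolding c_def k_def by (auto intro: subsetD[OF fs nth_mem])
  have A: "A \<in> carrier_mat n n" by (simp add: A_def)
  have "det A = 0" unfolding A_def by (rule det_row_0[OF _ c]) (simp add: k_def len)
  then obtain z where z: "z \<in> carrier_vec n" "z \<noteq> 0\<^sub>v n" "A *\<^sub>v z = 0\<^sub>v n"
    using det_0_iff_vec_prod_zero_field[OF A] by auto
  have "f \<bullet> z = 0" if "f \<in> set fs" for f
  proof -
    obtain i where i: "i < k" "f = fs ! i" using \<open>f \<in> set fs\<close> unfolding k_def by (auto simp: in_set_conv_nth)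
    have "f \<in> carrier_vec n" using \<open>f \<in> set fs\<close> fs by auto
    then have "row A i = f" unfolding A_def using i len c
      by (subst row_mat_of_row_fun) (auto simp: c_def k_def)
    then show ?thesis using arg_cong[OF z(3), of "\<lambda>v. v $ i"] A i len by (simp add: k_def)
  qed
  then show ?thesis using z by blast
qed

lemma diagonal_mat_eq_mat_diag:
  assumes "L \<in> carrier_mat n n" "diagonal_mat L"
  shows "L = mat_diag n (\<lambda>l. L $$ (l, l))"
  by (rule eq_matI) (use assms in \<open>auto simp: mat_diag_def diagonal_mat_def\<close>)

lemma inertia_similar_diagonal:
  assumes P: "P \<in> carrier_mat n n" and L: "L \<in> carrier_mat n n" "diagonal_mat L"
    and sim: "similar_mat P L"
  shows "inertia P = (card {l. l < n \<and> L $$ (l, l) < 0}, card {l. l < n \<and> L $$ (l, l) = 0},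
                      card {l. l < n \<and> 0 < L $$ (l, l)})"
proof -
  define ls where "ls = map (\<lambda>l. L $$ (l, l)) [0..<n]"
  have "L = mat_diag n (\<lambda>l. L $$ (l, l))" using L by (rule diagonal_mat_eq_mat_diag)
  then have cp: "char_poly P = (\<Prod>a\<leftarrow>ls. [:- a, 1:])"
    unfolding char_poly_similar[OF sim] ls_def by (metis char_poly_mat_diag)
  have count: "(\<Sum>x\<in>{x. eigenvalue P x \<and> Pr x}. Polynomial.order x (char_poly P))
      = card {l. l < n \<and> Pr (L $$ (l, l))}" for Pr
  proof -
    have "{x. eigenvalue P x \<and> Pr x} = {x. x \<in> set ls \<and> Pr x}"
      unfolding eigenvalue_root_char_poly[OF P] cp by (simp add: poly_prod_list_zero_iff)
    then have "(\<Sum>x\<in>{x. eigenvalue P x \<and> Pr x}. Polynomial.order x (char_poly P)) = length (filter Pr ls)"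
      unfolding cp order_prod_linear_factors by (simp only: sum_count_list_eq_length_filter)
    then show ?thesis by (simp add: ls_def filter_map length_filter_upt_eq_card)
  qed
  show ?thesis unfolding inertia_def by (simp only: count)
qed

lemma sum_sesquilinear_expand:
  fixes a :: "nat \<Rightarrow> nat \<Rightarrow> complex" and c :: "nat \<Rightarrow> complex"
  shows "(\<Sum>i<n. \<Sum>j<n. cnj (z i) * (\<Sum>k<N. cnj (a k i) * c k * a k j) * w j)
       = (\<Sum>k<N. c k * cnj (\<Sum>i<n. a k i * z i) * (\<Sum>j<n. a k j * w j))"
proof -
  have "(\<Sum>i<n. \<Sum>j<n. cnj (z i) * (\<Sum>k<N. cnj (a k i) * c k * a k j) * w j)
      = (\<Sum>i<n. \<Sum>j<n. \<Sum>k<N. c k * (cnj (a k i) * cnj (z i)) * (a k j * w j))"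
    by (simp add: sum_distrib_left sum_distrib_right mult_ac)
  also have "\<dots> = (\<Sum>i<n. \<Sum>k<N. \<Sum>j<n. c k * (cnj (a k i) * cnj (z i)) * (a k j * w j))"
    by (simp only: sum.swap[of _ "{..<n}" "{..<N}"])
  also have "\<dots> = (\<Sum>k<N. \<Sum>i<n. \<Sum>j<n. c k * (cnj (a k i) * cnj (z i)) * (a k j * w j))"
    by (rule sum.swap)
  also have "\<dots> = (\<Sum>k<N. c k * cnj (\<Sum>i<n. a k i * z i) * (\<Sum>j<n. a k j * w j))"
    by (simp add: sum_distrib_left sum_distrib_right mult_ac)
  finally show ?thesis .
qed

lemma herm_form_diagonal_congruence:
  assumes Q: "Q \<in> carrier_mat n n" and L: "L \<in> carrier_mat n n" "diagonal_mat L"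
    and z: "z \<in> carrier_vec n"
  shows "herm_form (Q * L * transpose_mat Q) z
       = of_real (\<Sum>l<n. L $$ (l, l) * (cmod (col (cmat Q) l \<bullet> z))\<^sup>2)"
proof -
  have QL: "Q * L = mat n n (\<lambda>(i, l). Q $$ (i, l) * L $$ (l, l))"
    by (subst diagonal_mat_eq_mat_diag[OF L], subst mat_diag_mult_right[OF Q]) simp
  have entry: "(Q * L * transpose_mat Q) $$ (i, j) = (\<Sum>l<n. Q $$ (i, l) * L $$ (l, l) * Q $$ (j, l))"
    if "i < n" "j < n" for i j
    using that Q unfolding QL by (simp add: scalar_prod_def lessThan_atLeast0)
  have "herm_form (Q * L * transpose_mat Q) z = (\<Sum>i<n. \<Sum>j<n. cnj (z $ i) *
      (\<Sum>l<n. cnj (of_real (Q $$ (i, l))) * of_real (L $$ (l, l)) * of_real (Q $$ (j, l))) * z $ j)"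
    using z unfolding herm_form_def by (intro sum.cong refl) (auto simp: entry)
  also have "\<dots> = (\<Sum>l<n. of_real (L $$ (l, l)) * cnj (\<Sum>i<n. of_real (Q $$ (i, l)) * z $ i)
      * (\<Sum>j<n. of_real (Q $$ (j, l)) * z $ j))"
    by (rule sum_sesquilinear_expand)
  also have "\<dots> = of_real (\<Sum>l<n. L $$ (l, l) * (cmod (\<Sum>j<n. of_real (Q $$ (j, l)) * z $ j))\<^sup>2)"
    by (simp only: of_real_sum of_real_mult mult.assoc cnj_mult_self)
  also have "\<dots> = of_real (\<Sum>l<n. L $$ (l, l) * (cmod (col (cmat Q) l \<bullet> z))\<^sup>2)"
    by (intro arg_cong[where f = of_real] sum.cong refl)
      (use Q z in \<open>simp add: cmat_def scalar_prod_def lessThan_atLeast0\<close>)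
  finally show ?thesis .
qed

lemma card_negative_weights_ge:
  fixes lam :: "nat \<Rightarrow> real" and q :: "nat \<Rightarrow> complex vec"
  assumes q: "\<And>l. l < n \<Longrightarrow> q l \<in> carrier_vec n" and fs: "set fs \<subseteq> carrier_vec n"
    and neg: "\<And>z. z \<in> carrier_vec n \<Longrightarrow> z \<noteq> 0\<^sub>v n \<Longrightarrow> (\<forall>f\<in>set fs. f \<bullet> z = 0) \<Longrightarrow>
                (\<Sum>l<n. lam l * (cmod (q l \<bullet> z))\<^sup>2) < 0"
  shows "n - length fs \<le> card {l. l < n \<and> lam l < 0}"
proof (rule ccontr)
  assume few: "\<not> ?thesis"
  define gs where "gs = map q (filter (\<lambda>l. lam l < 0) [0..<n]) @ fs"
  have "length gs < n"
    using few by (simp add: gs_def length_filter_upt_eq_card)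
  moreover have "set gs \<subseteq> carrier_vec n" using q fs by (auto simp: gs_def)
  ultimately obtain z where z: "z \<in> carrier_vec n" "z \<noteq> 0\<^sub>v n" and orth: "\<forall>g\<in>set gs. g \<bullet> z = 0"
    using exists_nonzero_orthogonal_vec by blast
  have "0 \<le> lam l * (cmod (q l \<bullet> z))\<^sup>2" if "l \<in> {..<n}" for l
    using orth that by (cases "lam l < 0") (auto simp: gs_def)
  then have "0 \<le> (\<Sum>l<n. lam l * (cmod (q l \<bullet> z))\<^sup>2)" by (rule sum_nonneg)
  moreover have "\<forall>f\<in>set fs. f \<bullet> z = 0" using orth by (simp add: gs_def)
  ultimately show False using neg[OF z] by simp
qed

lemma card_sign_partition:
  fixes f :: "nat \<Rightarrow> 'a::linorder"
  shows "card {l. l < n \<and> f l < c} + card {l. l < n \<and> f l = c} + card {l. l < n \<and> c < f l} = n"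
proof -
  have "{..<n} = {l. l < n \<and> f l < c} \<union> {l. l < n \<and> f l = c} \<union> {l. l < n \<and> c < f l}"
    by auto
  then have "n = card ({l. l < n \<and> f l < c} \<union> {l. l < n \<and> f l = c} \<union> {l. l < n \<and> c < f l})"
    by (metis card_lessThan)
  also have "\<dots> = card {l. l < n \<and> f l < c} + card {l. l < n \<and> f l = c} + card {l. l < n \<and> c < f l}"
    by (subst card_Un_disjoint; auto)+
  finally show ?thesis by simp
qed

theorem inertia_eqI:
  fixes P :: "real mat" and fs gs :: "complex vec list"
  assumes P: "P \<in> carrier_mat n n" "transpose_mat P = P"
    and fs: "set fs \<subseteq> carrier_vec n" and gs: "set gs \<subseteq> carrier_vec n"
    and len: "length fs + length gs = n"
    and neg: "\<And>z. z \<in> carrier_vec n \<Longrightarrow> z \<noteq> 0\<^sub>v n \<Longrightarrow> (\<forall>f\<in>set fs. f \<bullet> z = 0) \<Longrightarrow>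
                Re (herm_form P z) < 0"
    and pos: "\<And>z. z \<in> carrier_vec n \<Longrightarrow> z \<noteq> 0\<^sub>v n \<Longrightarrow> (\<forall>g\<in>set gs. g \<bullet> z = 0) \<Longrightarrow>
                0 < Re (herm_form P z)"
  shows "inertia P = (length gs, 0, length fs)"
proof -
  obtain Q L where "orthonormal_mat n Q" and L: "L \<in> carrier_mat n n" "diagonal_mat L"
    and P_eq: "P = Q * L * transpose_mat Q"
    using real_symmetric_orthonormal_diagonalization[OF P] by blast
  then have Q: "Q \<in> carrier_mat n n" and QTQ: "transpose_mat Q * Q = 1\<^sub>m n"
    and QQT: "Q * transpose_mat Q = 1\<^sub>m n"
    by (auto simp: orthonormal_mat_def)
  define lam where "lam l = L $$ (l, l)" for l
  have "similar_mat P L"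
    unfolding similar_mat_def similar_mat_wit_def Let_def using P Q L QTQ QQT P_eq
    by (intro exI[of _ Q] exI[of _ "transpose_mat Q"]) auto
  then have inertia: "inertia P = (card {l. l < n \<and> lam l < 0}, card {l. l < n \<and> lam l = 0},
                                   card {l. l < n \<and> 0 < lam l})"
    unfolding lam_def using inertia_similar_diagonal[OF P(1) L] by simp
  have form: "Re (herm_form P z) = (\<Sum>l<n. lam l * (cmod (col (cmat Q) l \<bullet> z))\<^sup>2)"
    if "z \<in> carrier_vec n" for z
    unfolding P_eq herm_form_diagonal_congruence[OF Q L that] lam_def by simp
  have col: "col (cmat Q) l \<in> carrier_vec n" for l using Q by (auto simp: cmat_def intro!: carrier_vecI)
  have neg_count: "n - length fs \<le> card {l. l < n \<and> lam l < 0}"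
    by (rule card_negative_weights_ge[where q = "\<lambda>l. col (cmat Q) l", OF col fs])
      (use neg in \<open>simp add: form\<close>)
  have "n - length gs \<le> card {l. l < n \<and> - lam l < 0}"
    by (rule card_negative_weights_ge[where q = "\<lambda>l. col (cmat Q) l", OF col gs])
      (use pos in \<open>simp add: form sum_negf\<close>)
  then have pos_count: "n - length gs \<le> card {l. l < n \<and> 0 < lam l}" by simp
  have "card {l. l < n \<and> lam l < 0} = length gs" "card {l. l < n \<and> lam l = 0} = 0"
    "card {l. l < n \<and> 0 < lam l} = length fs"
    using neg_count pos_count card_sign_partition[of n lam 0] len by linarith+
  then show ?thesis unfolding inertia by simp
qed

section \<open>Dominance certificates\<close>

lemma p_dominantI:
  fixes A P :: "real mat"
  assumes A: "A \<in> carrier_mat n n" and P: "P \<in> carrier_mat n n" and sym: "transpose_mat P = P"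
    and inertia: "inertia P = (p, 0, n - p)"
    and lyap: "\<And>x. x \<in> carrier_vec n \<Longrightarrow> x \<bullet> (P *\<^sub>v (A *\<^sub>v x + rate \<cdot>\<^sub>v x)) \<le> 0"
  shows "p_dominant n A rate p"
proof -
  have "x \<bullet> ((transpose_mat A * P + P * A) *\<^sub>v x) \<le> x \<bullet> (((- 2 * rate) \<cdot>\<^sub>m P - 0 \<cdot>\<^sub>m 1\<^sub>m n) *\<^sub>v x)"
    if x: "x \<in> carrier_vec n" for x
  proof -
    have Ax: "A *\<^sub>v x \<in> carrier_vec n" and Px: "P *\<^sub>v x \<in> carrier_vec n" using A P x by auto
    have "x \<bullet> (transpose_mat A *\<^sub>v (P *\<^sub>v x)) = (transpose_mat A *\<^sub>v (P *\<^sub>v x)) \<bullet> x"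
      using A Px x by (intro comm_scalar_prod[of _ n]) auto
    also have "\<dots> = (P *\<^sub>v x) \<bullet> (A *\<^sub>v x)" by (rule transpose_vec_mult_scalar[OF A x Px])
    also have "\<dots> = x \<bullet> (P *\<^sub>v (A *\<^sub>v x))"
      using transpose_vec_mult_scalar[OF P Ax x] unfolding sym .
    finally have lhs: "x \<bullet> ((transpose_mat A * P + P * A) *\<^sub>v x) = 2 * (x \<bullet> (P *\<^sub>v (A *\<^sub>v x)))"
      using A P x by (simp add: add_mult_distrib_mat_vec[of _ n n] assoc_mult_mat_vec[of _ n n _ n]
          scalar_prod_add_distrib[of _ n])
    have "((- 2 * rate) \<cdot>\<^sub>m P - 0 \<cdot>\<^sub>m 1\<^sub>m n) *\<^sub>v x = (- 2 * rate) \<cdot>\<^sub>v (P *\<^sub>v x)"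
      by (rule eq_vecI) (use P x in \<open>auto simp: scalar_prod_def sum_distrib_left mult_ac\<close>)
    then have rhs: "x \<bullet> (((- 2 * rate) \<cdot>\<^sub>m P - 0 \<cdot>\<^sub>m 1\<^sub>m n) *\<^sub>v x) = - 2 * rate * (x \<bullet> (P *\<^sub>v x))"
      using x Px by simp
    have "x \<bullet> (P *\<^sub>v (A *\<^sub>v x)) + rate * (x \<bullet> (P *\<^sub>v x)) \<le> 0"
      using lyap[OF x] P Ax x by (simp add: mult_add_distrib_mat_vec[of _ n n] mult_mat_vec[of _ n n]
          scalar_prod_add_distrib[of _ n])
    then show ?thesis unfolding lhs rhs by simp
  qed
  then have "loewner_le n (transpose_mat A * P + P * A) ((- 2 * rate) \<cdot>\<^sub>m P - 0 \<cdot>\<^sub>m 1\<^sub>m n)"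
    unfolding loewner_le_def using A P by auto
  then show ?thesis unfolding p_dominant_def using P sym inertia by auto
qed

interpretation cnj_hom: semiring_hom cnj
  by unfold_locales auto

locale complex_diagonalization =
  fixes n :: nat and K :: "real mat" and S Y :: "complex mat" and dk :: "nat \<Rightarrow> complex"
  assumes K: "K \<in> carrier_mat n n" and S: "S \<in> carrier_mat n n" and Y: "Y \<in> carrier_mat n n"
    and SY: "S * Y = 1\<^sub>m n" and YS: "Y * S = 1\<^sub>m n"
    and K_eq: "cmat K = S * mat_diag n dk * Y"
begin

lemma cmat_K: "cmat K \<in> carrier_mat n n"
  using K by (simp add: cmat_def)

lemma left_eigenvectors: "Y * cmat K = mat_diag n dk * Y"
proof -
  have "Y * cmat K = (Y * S) * mat_diag n dk * Y"
    unfolding K_eq using Y S by (simp add: assoc_mult_mat[of _ n n _ n _ n])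
  then show ?thesis using Y by (simp add: YS left_mult_one_mat[OF mat_diag_dim])
qed

lemma right_eigenvectors: "cmat K * S = S * mat_diag n dk"
proof -
  have "cmat K * S = S * mat_diag n dk * (Y * S)"
    unfolding K_eq by (rule assoc_mult_mat[of _ n n _ n _ n]) (use S Y in auto)
  then show ?thesis using S by (simp add: YS right_mult_one_mat[OF mult_carrier_mat[OF S mat_diag_dim]])
qed

lemma Y_mult_vec_K:
  assumes x: "x \<in> carrier_vec n" and k: "k < n"
  shows "(Y *\<^sub>v map_vec of_real (K *\<^sub>v x)) $ k = dk k * (Y *\<^sub>v map_vec of_real x) $ k"
proof -
  have "Y *\<^sub>v map_vec of_real (K *\<^sub>v x) = (Y * cmat K) *\<^sub>v map_vec of_real x"
    using K Y x by (simp add: of_real_hom.mult_mat_vec_hom[OF K x] cmat_def)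
  also have "\<dots> = (mat_diag n dk * Y) *\<^sub>v map_vec of_real x" unfolding left_eigenvectors ..
  finally show ?thesis
    using Y x k by (simp add: mat_diag_mult_left[OF Y] scalar_prod_def sum_distrib_left mult_ac)
qed

lemma Y_mult_vec_eq_0:
  assumes "z \<in> carrier_vec n" and "Y *\<^sub>v z = 0\<^sub>v n"
  shows "z = 0\<^sub>v n"
proof -
  have "z = (S * Y) *\<^sub>v z" using assms(1) by (simp add: SY)
  also have "\<dots> = S *\<^sub>v (Y *\<^sub>v z)" using S Y assms(1) by simp
  also have "\<dots> = 0\<^sub>v n" unfolding assms(2) using S by (intro eq_vecI) auto
  finally show ?thesis .
qed

lemma conj_left_eigenvectors:
  "map_mat cnj Y * cmat K = mat_diag n (\<lambda>k. cnj (dk k)) * map_mat cnj Y"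
proof -
  have "map_mat cnj (cmat K) = cmat K" by (rule eq_matI) (auto simp: cmat_def)
  then have "map_mat cnj Y * cmat K = map_mat cnj (Y * cmat K)"
    using cnj_hom.mat_hom_mult[OF Y cmat_K] by simp
  also have "\<dots> = map_mat cnj (mat_diag n dk) * map_mat cnj Y"
    unfolding left_eigenvectors by (rule cnj_hom.mat_hom_mult[OF mat_diag_dim Y])
  also have "map_mat cnj (mat_diag n dk) = mat_diag n (\<lambda>k. cnj (dk k))"
    by (rule eq_matI) (auto simp: mat_diag_def)
  finally show ?thesis .
qed

text \<open>The matrix \<open>C = conj Y * S\<close> intertwines \<open>diag dk\<close> with \<open>diag (conj dk)\<close>, so
  \<open>conj Y *\<^sub>v z = C *\<^sub>v (Y *\<^sub>v z)\<close> only mixes coordinates whose eigenvalues have equal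
  real parts.\<close>

lemma conj_Y_mult_vec_eq_0:
  assumes z: "z \<in> carrier_vec n"
    and vanish: "\<And>l. l < n \<Longrightarrow> \<Phi> (Re (dk l)) \<Longrightarrow> (Y *\<^sub>v z) $ l = 0"
    and k: "k < n" "\<Phi> (Re (dk k))"
  shows "(map_mat cnj Y *\<^sub>v z) $ k = 0"
proof -
  let ?Yc = "map_mat cnj Y" and ?D = "mat_diag n dk" and ?Dc = "mat_diag n (\<lambda>k. cnj (dk k))"
  have Yc: "?Yc \<in> carrier_mat n n" using Y by simp
  define C where "C = ?Yc * S"
  have C: "C \<in> carrier_mat n n" unfolding C_def using Yc S by simp
  have "C * ?D = (?Yc * cmat K) * S"
    unfolding C_def using Yc S cmat_K
    by (simp add: assoc_mult_mat[of _ n n _ n _ n] right_eigenvectors)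
  also have "\<dots> = ?Dc * C"
    unfolding conj_left_eigenvectors C_def using Yc S by (simp add: assoc_mult_mat[of _ n n _ n _ n])
  finally have CD: "C * ?D = ?Dc * C" .
  have C_entry: "C $$ (k, l) = 0 \<or> dk l = cnj (dk k)" if "l < n" for l
  proof -
    have "C $$ (k, l) * dk l = C $$ (k, l) * cnj (dk k)"
      using arg_cong[OF CD, of "\<lambda>M. M $$ (k, l)"] that k C
      by (simp add: mat_diag_mult_left[OF C] mat_diag_mult_right[OF C] mult.commute)
    then show ?thesis by simp
  qed
  have "(S * Y) *\<^sub>v z = z" using z by (simp add: SY)
  then have "?Yc *\<^sub>v z = C *\<^sub>v (Y *\<^sub>v z)"
    unfolding C_def using Yc S Y z by simp
  then have "(?Yc *\<^sub>v z) $ k = (\<Sum>l<n. C $$ (k, l) * (Y *\<^sub>v z) $ l)"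
    using C Y z k by (simp add: scalar_prod_def lessThan_atLeast0)
  also have "\<dots> = 0"
  proof (rule sum.neutral, rule ballI)
    fix l assume "l \<in> {..<n}"
    then show "C $$ (k, l) * (Y *\<^sub>v z) $ l = 0"
      using C_entry[of l] vanish[of l] k by auto
  qed
  finally show ?thesis .
qed

definition weight :: "nat \<Rightarrow> real" where
  "weight k = (if 0 < Re (dk k) then -1 else 1)"

text \<open>The certificate \<open>Re (Y\<^sup>* G Y)\<close>, \<open>G = diag weight\<close>: in the coordinates \<open>Y x\<close> it is
  diagonal, with sign \<open>-1\<close> exactly on the dominant eigenvalues.\<close>

definition dominance_mat :: "real mat" where
  "dominance_mat = mat n n (\<lambda>(i, j). Re (\<Sum>k<n. cnj (Y $$ (k, i)) * of_real (weight k) * Y $$ (k, j)))"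

lemma dominance_mat_carrier: "dominance_mat \<in> carrier_mat n n"
  by (simp add: dominance_mat_def)

lemma dominance_mat_symmetric: "transpose_mat dominance_mat = dominance_mat"
  by (rule eq_matI) (auto simp: dominance_mat_def mult_ac)

lemma scalar_prod_dominance_mat:
  assumes x: "x \<in> carrier_vec n" and w: "w \<in> carrier_vec n"
  shows "x \<bullet> (dominance_mat *\<^sub>v w) = Re (\<Sum>k<n. of_real (weight k)
           * cnj ((Y *\<^sub>v map_vec of_real x) $ k) * (Y *\<^sub>v map_vec of_real w) $ k)"
proof -
  have "x \<bullet> (dominance_mat *\<^sub>v w) = Re (\<Sum>i<n. \<Sum>j<n. cnj (of_real (x $ i))
      * (\<Sum>k<n. cnj (Y $$ (k, i)) * of_real (weight k) * Y $$ (k, j)) * of_real (w $ j))"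
    using x w by (simp add: dominance_mat_def scalar_prod_def lessThan_atLeast0 sum_distrib_left Re_sum mult_ac)
  also have "\<dots> = Re (\<Sum>k<n. of_real (weight k) * cnj (\<Sum>i<n. Y $$ (k, i) * of_real (x $ i))
      * (\<Sum>j<n. Y $$ (k, j) * of_real (w $ j)))"
    by (simp only: sum_sesquilinear_expand)
  also have "\<dots> = Re (\<Sum>k<n. of_real (weight k)
      * cnj ((Y *\<^sub>v map_vec of_real x) $ k) * (Y *\<^sub>v map_vec of_real w) $ k)"
    using x w Y by (intro arg_cong[where f = Re] sum.cong refl) (auto simp: scalar_prod_def lessThan_atLeast0)
  finally show ?thesis .
qed

lemma dominance_mat_lyapunov:
  assumes "0 \<le> \<epsilon>" and gap: "\<And>k. k < n \<Longrightarrow> 0 < Re (dk k) \<Longrightarrow> \<epsilon> < Re (dk k)"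
    and x: "x \<in> carrier_vec n"
  shows "x \<bullet> (dominance_mat *\<^sub>v (K *\<^sub>v x - \<epsilon> \<cdot>\<^sub>v x)) \<le> 0"
proof -
  define y where "y = Y *\<^sub>v map_vec of_real x"
  have Kx: "K *\<^sub>v x - \<epsilon> \<cdot>\<^sub>v x \<in> carrier_vec n" using K x by simp
  have "(Y *\<^sub>v map_vec of_real (K *\<^sub>v x - \<epsilon> \<cdot>\<^sub>v x)) $ k = (dk k - of_real \<epsilon>) * y $ k" if "k < n" for k
  proof -
    have cx: "map_vec of_real (K *\<^sub>v x) \<in> carrier_vec n" "map_vec complex_of_real x \<in> carrier_vec n"
      using K x by auto
    have eq: "map_vec of_real (K *\<^sub>v x - \<epsilon> \<cdot>\<^sub>v x) = map_vec of_real (K *\<^sub>v x) - of_real \<epsilon> \<cdot>\<^sub>v map_vec of_real x"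
      using K x by (intro eq_vecI) auto
    have "Y *\<^sub>v map_vec of_real (K *\<^sub>v x - \<epsilon> \<cdot>\<^sub>v x) = Y *\<^sub>v map_vec of_real (K *\<^sub>v x) - of_real \<epsilon> \<cdot>\<^sub>v y"
      unfolding eq y_def by (subst mult_minus_distrib_mat_vec[OF Y]) (use cx in \<open>auto simp: mult_mat_vec[OF Y]\<close>)
    then show ?thesis
      using Y_mult_vec_K[OF x that] Y that by (simp add: y_def algebra_simps)
  qed
  then have "x \<bullet> (dominance_mat *\<^sub>v (K *\<^sub>v x - \<epsilon> \<cdot>\<^sub>v x))
      = Re (\<Sum>k<n. of_real (weight k) * (dk k - of_real \<epsilon>) * (cnj (y $ k) * y $ k))"
    unfolding scalar_prod_dominance_mat[OF x Kx] y_def[symmetric]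
    by (intro arg_cong[where f = Re] sum.cong refl) (simp add: mult_ac)
  also have "\<dots> = (\<Sum>k<n. weight k * (Re (dk k) - \<epsilon>) * (cmod (y $ k))\<^sup>2)"
    by (simp add: Re_sum cnj_mult_self)
  also have "\<dots> \<le> 0"
    using gap \<open>0 \<le> \<epsilon>\<close> by (intro sum_nonpos) (auto simp: weight_def mult_nonpos_nonneg less_imp_le)
  finally show ?thesis .
qed

lemma herm_form_dominance_mat:
  assumes z: "z \<in> carrier_vec n"
  shows "2 * Re (herm_form dominance_mat z) = (\<Sum>k<n. weight k * (cmod ((Y *\<^sub>v z) $ k))\<^sup>2)
           + (\<Sum>k<n. weight k * (cmod ((map_mat cnj Y *\<^sub>v z) $ k))\<^sup>2)"
proof -
  define h where "h i j = (\<Sum>k<n. cnj (Y $$ (k, i)) * of_real (weight k) * Y $$ (k, j))" for i j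
  have cnj_h: "cnj (h i j) = (\<Sum>k<n. cnj (cnj (Y $$ (k, i))) * of_real (weight k) * cnj (Y $$ (k, j)))"
    for i j unfolding h_def by simp
  have entry: "2 * of_real (dominance_mat $$ (i, j)) = h i j + cnj (h i j)" if "i < n" "j < n" for i j
    using that by (simp add: dominance_mat_def h_def[symmetric] complex_add_cnj)
  have "2 * herm_form dominance_mat z
      = (\<Sum>i<n. \<Sum>j<n. cnj (z $ i) * (2 * of_real (dominance_mat $$ (i, j))) * z $ j)"
    using z by (simp add: herm_form_def sum_distrib_left mult_ac)
  also have "\<dots> = (\<Sum>i<n. \<Sum>j<n. cnj (z $ i) * h i j * z $ j + cnj (z $ i) * cnj (h i j) * z $ j)"
    by (intro sum.cong refl) (simp add: entry algebra_simps)
  also have "\<dots> = (\<Sum>i<n. \<Sum>j<n. cnj (z $ i) * h i j * z $ j)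
      + (\<Sum>i<n. \<Sum>j<n. cnj (z $ i) * cnj (h i j) * z $ j)"
    by (simp only: sum.distrib)
  also have "(\<Sum>i<n. \<Sum>j<n. cnj (z $ i) * h i j * z $ j)
      = (\<Sum>k<n. of_real (weight k) * cnj ((Y *\<^sub>v z) $ k) * (Y *\<^sub>v z) $ k)"
    unfolding h_def sum_sesquilinear_expand using Y z
    by (intro sum.cong refl) (auto simp: scalar_prod_def lessThan_atLeast0)
  also have "(\<Sum>i<n. \<Sum>j<n. cnj (z $ i) * cnj (h i j) * z $ j)
      = (\<Sum>k<n. of_real (weight k) * cnj ((map_mat cnj Y *\<^sub>v z) $ k) * (map_mat cnj Y *\<^sub>v z) $ k)"
    unfolding cnj_h sum_sesquilinear_expand using Y z
    by (intro sum.cong refl) (auto simp: scalar_prod_def lessThan_atLeast0)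
  finally have "2 * herm_form dominance_mat z = of_real ((\<Sum>k<n. weight k * (cmod ((Y *\<^sub>v z) $ k))\<^sup>2)
           + (\<Sum>k<n. weight k * (cmod ((map_mat cnj Y *\<^sub>v z) $ k))\<^sup>2))"
    by (simp only: of_real_add of_real_sum of_real_mult mult.assoc cnj_mult_self)
  from arg_cong[OF this, of Re] show ?thesis by simp
qed

lemma herm_form_dominance_mat_sign:
  assumes z: "z \<in> carrier_vec n" "z \<noteq> 0\<^sub>v n" and c: "c = 1 \<or> c = -1"
    and vanish: "\<And>k. k < n \<Longrightarrow> weight k = c \<Longrightarrow> (Y *\<^sub>v z) $ k = 0"
  shows "c * Re (herm_form dominance_mat z) < 0"
proof -
  have vanish_cnj: "(map_mat cnj Y *\<^sub>v z) $ k = 0" if "k < n" "weight k = c" for k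
    by (rule conj_Y_mult_vec_eq_0[OF z(1), where \<Phi> = "\<lambda>r. (if 0 < r then -1 else 1) = c"])
      (use vanish that in \<open>auto simp: weight_def\<close>)
  have flip: "c * weight k = -1" if "weight k \<noteq> c" for k
    using c that by (auto simp: weight_def)
  have Y_terms: "c * weight k * (cmod ((Y *\<^sub>v z) $ k))\<^sup>2 = - (cmod ((Y *\<^sub>v z) $ k))\<^sup>2" if "k < n" for k
    using vanish[OF that] flip[of k] by (cases "weight k = c") auto
  have cnj_terms: "c * weight k * (cmod ((map_mat cnj Y *\<^sub>v z) $ k))\<^sup>2
      = - (cmod ((map_mat cnj Y *\<^sub>v z) $ k))\<^sup>2" if "k < n" for k
    using vanish_cnj[OF that] flip[of k] by (cases "weight k = c") auto
  obtain k0 where k0: "k0 < n" "(Y *\<^sub>v z) $ k0 \<noteq> 0"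
  proof (rule ccontr)
    assume "\<not> thesis"
    then have "Y *\<^sub>v z = 0\<^sub>v n" using that Y by (intro eq_vecI) auto
    then show False using Y_mult_vec_eq_0[OF z(1)] z(2) by blast
  qed
  have "0 < (\<Sum>k<n. (cmod ((Y *\<^sub>v z) $ k))\<^sup>2)" using k0 by (intro sum_pos2[of _ k0]) auto
  moreover have "0 \<le> (\<Sum>k<n. (cmod ((map_mat cnj Y *\<^sub>v z) $ k))\<^sup>2)" by (intro sum_nonneg) auto
  moreover have "c * (2 * Re (herm_form dominance_mat z)) = - (\<Sum>k<n. (cmod ((Y *\<^sub>v z) $ k))\<^sup>2)
      - (\<Sum>k<n. (cmod ((map_mat cnj Y *\<^sub>v z) $ k))\<^sup>2)"
    unfolding herm_form_dominance_mat[OF z(1)] distrib_left sum_distrib_left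
    by (simp add: mult.assoc[symmetric] Y_terms cnj_terms sum_negf)
  ultimately show ?thesis by linarith
qed

lemma inertia_dominance_mat:
  "inertia dominance_mat = (card {k. k < n \<and> 0 < Re (dk k)}, 0, n - card {k. k < n \<and> 0 < Re (dk k)})"
proof -
  define rows where "rows c = map (row Y) (filter (\<lambda>k. weight k = c) [0..<n])" for c
  have rows_carrier: "set (rows c) \<subseteq> carrier_vec n" for c using Y by (auto simp: rows_def)
  have rows_orth: "(Y *\<^sub>v z) $ k = 0" if "\<forall>f\<in>set (rows c). f \<bullet> z = 0" "k < n" "weight k = c" for z c k
    using that Y by (auto simp: rows_def)
  have "filter (\<lambda>k. weight k = -1) [0..<n] = filter (\<lambda>k. 0 < Re (dk k)) [0..<n]"
    by (simp add: weight_def)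
  then have len_dominant: "length (rows (-1)) = card {k. k < n \<and> 0 < Re (dk k)}"
    by (simp add: rows_def length_filter_upt_eq_card)
  have "filter (\<lambda>k. \<not> weight k = 1) [0..<n] = filter (\<lambda>k. weight k = -1) [0..<n]"
    by (simp add: weight_def)
  then have len_total: "length (rows 1) + length (rows (-1)) = n"
    using sum_length_filter_compl[of "\<lambda>k. weight k = 1" "[0..<n]"] by (simp add: rows_def)
  moreover have "Re (herm_form dominance_mat z) < 0"
    if "z \<in> carrier_vec n" "z \<noteq> 0\<^sub>v n" "\<forall>f\<in>set (rows 1). f \<bullet> z = 0" for z
    using herm_form_dominance_mat_sign[of z 1] rows_orth that by auto
  moreover have "0 < Re (herm_form dominance_mat z)"
    if "z \<in> carrier_vec n" "z \<noteq> 0\<^sub>v n" "\<forall>g\<in>set (rows (-1)). g \<bullet> z = 0" for z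
    using herm_form_dominance_mat_sign[of z "-1"] rows_orth that by auto
  ultimately have "inertia dominance_mat = (length (rows (-1)), 0, length (rows 1))"
    by (intro inertia_eqI[OF dominance_mat_carrier dominance_mat_symmetric rows_carrier rows_carrier])
  then show ?thesis using len_total len_dominant by simp
qed

theorem p_dominant_shift:
  assumes "0 \<le> \<epsilon>" and "\<And>k. k < n \<Longrightarrow> 0 < Re (dk k) \<Longrightarrow> \<epsilon> < Re (dk k)"
  shows "p_dominant n (a \<cdot>\<^sub>m 1\<^sub>m n + K) (- a - \<epsilon>) (card {k. k < n \<and> 0 < Re (dk k)})"
proof (rule p_dominantI[OF _ dominance_mat_carrier dominance_mat_symmetric inertia_dominance_mat])
  show "a \<cdot>\<^sub>m 1\<^sub>m n + K \<in> carrier_mat n n" using K by simp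
  fix x :: "real vec" assume x: "x \<in> carrier_vec n"
  have "(a \<cdot>\<^sub>m 1\<^sub>m n + K) *\<^sub>v x + (- a - \<epsilon>) \<cdot>\<^sub>v x = K *\<^sub>v x - \<epsilon> \<cdot>\<^sub>v x"
    by (rule eq_vecI) (use K x in \<open>auto simp: add_mult_distrib_mat_vec[of _ n n] algebra_simps\<close>)
  then show "x \<bullet> (dominance_mat *\<^sub>v ((a \<cdot>\<^sub>m 1\<^sub>m n + K) *\<^sub>v x + (- a - \<epsilon>) \<cdot>\<^sub>v x)) \<le> 0"
    using dominance_mat_lyapunov[OF assms x] by simp
qed

lemma char_poly_cmat_K: "char_poly (cmat K) = (\<Prod>a\<leftarrow>map dk [0..<n]. [:- a, 1:])"
proof -
  have sim: "similar_mat (cmat K) (mat_diag n dk)"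
    unfolding similar_mat_def similar_mat_wit_def Let_def using cmat_K S Y SY YS K_eq
    by (intro exI[of _ S] exI[of _ Y]) auto
  show ?thesis unfolding char_poly_similar[OF sim] by (rule char_poly_mat_diag)
qed

context
  fixes A B :: "real mat" and d :: nat
  assumes A: "A \<in> carrier_mat n d" and B: "B \<in> carrier_mat d n" and K_AB: "K = A * B"
begin

lemma alg_mult_swap:
  assumes "\<mu> \<noteq> 0"
  shows "alg_mult (B * A) \<mu> = count_list (map dk [0..<n]) \<mu>"
proof -
  have cA: "cmat A \<in> carrier_mat n d" and cB: "cmat B \<in> carrier_mat d n"
    using A B by (auto simp: cmat_def)
  have "alg_mult (B * A) \<mu> = Polynomial.order \<mu> (char_poly (cmat B * cmat A))"
    unfolding alg_mult_def cmat_def of_real_hom.mat_hom_mult[OF B A] ..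
  also have "\<dots> = Polynomial.order \<mu> (char_poly (cmat A * cmat B))"
    using order_char_poly_mult_commute[OF cA cB assms] by simp
  also have "cmat A * cmat B = cmat K"
    unfolding K_AB cmat_def of_real_hom.mat_hom_mult[OF A B] ..
  finally show ?thesis unfolding char_poly_cmat_K order_prod_linear_factors .
qed

lemma pos_eigs_swap: "pos_eigs (B * A) = {\<mu> \<in> dk ` {..<n}. 0 < Re \<mu>}"
proof -
  have BA: "B * A \<in> carrier_mat d d" using A B by simp
  have "0 < alg_mult (B * A) \<mu> \<longleftrightarrow> \<mu> \<in> dk ` {..<n}" if "0 < Re \<mu>" for \<mu>
  proof -
    have "\<mu> \<noteq> 0" using that by auto
    then show ?thesis by (auto simp: alg_mult_swap count_list_0_iff atLeast0LessThan simp flip: neq0_conv)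
  qed
  then show ?thesis unfolding pos_eigs_def eigenvalue_cmat_iff_alg_mult[OF BA] by blast
qed

lemma sum_alg_mult_pos_eigs_swap:
  "(\<Sum>\<mu>\<in>pos_eigs (B * A). alg_mult (B * A) \<mu>) = card {k. k < n \<and> 0 < Re (dk k)}"
proof -
  have "(\<Sum>\<mu>\<in>pos_eigs (B * A). alg_mult (B * A) \<mu>) = length (filter (\<lambda>\<mu>. 0 < Re \<mu>) (map dk [0..<n]))"
    using A B alg_mult_swap by (intro sum_alg_mult_pos_eigs[of _ d]) auto
  then show ?thesis by (simp add: filter_map length_filter_upt_eq_card)
qed

end

end

lemma size_Lambda_D: "size (Lambda_D \<omega> M) = (\<Sum>\<mu>\<in>pos_eigs M. alg_mult M \<mu>)"
  unfolding Lambda_D_def by simp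

lemma diagonalizable_shift:
  assumes K: "K \<in> carrier_mat n n" and diag: "diagonalizable (a \<cdot>\<^sub>m 1\<^sub>m n + K)"
  shows "\<exists>S Y dk. complex_diagonalization n K S Y dk"
proof -
  let ?J = "a \<cdot>\<^sub>m 1\<^sub>m n + K"
  obtain D S Y where D: "diagonal_mat D" and wit: "similar_mat_wit (cmat ?J) D S Y"
    using diag unfolding diagonalizable_def similar_mat_def by blast
  have "cmat ?J \<in> carrier_mat n n" using K by (simp add: cmat_def)
  note wit = similar_mat_witD2[OF this wit]
  have S: "S \<in> carrier_mat n n" and Y: "Y \<in> carrier_mat n n" and D_carrier: "D \<in> carrier_mat n n"
    using wit by auto
  define dk where "dk i = D $$ (i, i) - of_real a" for i
  have "mat_diag n dk = D - of_real a \<cdot>\<^sub>m 1\<^sub>m n"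
    by (rule eq_matI) (use D_carrier D in \<open>auto simp: mat_diag_def diagonal_mat_def dk_def\<close>)
  then have "S * mat_diag n dk = S * D - of_real a \<cdot>\<^sub>m S"
    using S D_carrier
    by (simp add: mult_minus_distrib_mat[of S n n] mult_smult_distrib[OF S one_carrier_mat])
  then have "S * mat_diag n dk * Y = S * D * Y - of_real a \<cdot>\<^sub>m (S * Y)"
    using S D_carrier Y by (simp add: minus_mult_distrib_mat[of _ n n] mult_smult_assoc_mat[of S n n Y n])
  also have "\<dots> = cmat K"
    unfolding wit(3)[symmetric] wit(1) by (rule eq_matI) (use K in \<open>auto simp: cmat_def\<close>)
  finally have "complex_diagonalization n K S Y dk"
    using K S Y wit(1,2) by unfold_locales auto
  then show ?thesis by blast
qed

theorem corollary1:
  fixes n d m :: nat and \<omega> \<sigma>\<^sub>b t\<^sub>0 h \<epsilon> :: real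
    and W\<^sub>i\<^sub>n U R W\<^sub>o\<^sub>u\<^sub>t J\<^sub>T :: "real mat"
    and u r :: "real \<Rightarrow> real vec"
  assumes dn: "d < n"
    and Win: "W\<^sub>i\<^sub>n \<in> carrier_mat n d"
    and Win_rank: "vec_space.rank n W\<^sub>i\<^sub>n = d"
    and ones: "vec n (\<lambda>_. 1) \<notin> {W\<^sub>i\<^sub>n *\<^sub>v x | x. x \<in> carrier_vec d}"
    and om: "\<omega> < 1"
    and u_dim: "\<forall>t\<ge>0. u t \<in> carrier_vec d"
    and r_dim: "\<forall>t\<ge>0. r t \<in> carrier_vec n"
    and r0: "r 0 = 0\<^sub>v n"
    and ode: "\<forall>t\<ge>0. \<forall>i<n. ((\<lambda>s. r s $ i) has_real_derivative
                 ((-1 + \<omega>) * r t $ i + (W\<^sub>i\<^sub>n *\<^sub>v u t) $ i + \<sigma>\<^sub>b)) (at t within {0..})"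
    and t0: "0 \<le> t\<^sub>0" and h: "0 < h"
    and U_def: "U = mat d m (\<lambda>(i, k). u (t\<^sub>0 + real k * h) $ i)"
    and R_def: "R = mat n m (\<lambda>(i, k). r (t\<^sub>0 + real k * h) $ i)"
    and U_rank: "vec_space.rank d U = d"
    and R_rank: "vec_space.rank n R = n"
    and Wout: "W\<^sub>o\<^sub>u\<^sub>t = U * pinv R"
    and JT: "J\<^sub>T = (-1 + \<omega>) \<cdot>\<^sub>m 1\<^sub>m n + W\<^sub>i\<^sub>n * W\<^sub>o\<^sub>u\<^sub>t"
    and diag: "diagonalizable J\<^sub>T"
    and inv: "invertible_mat J\<^sub>T"
    and nonempty: "Lambda_D \<omega> (W\<^sub>o\<^sub>u\<^sub>t * W\<^sub>i\<^sub>n) \<noteq> {#}"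
    and eps: "0 \<le> \<epsilon>" "\<epsilon> < Min (Re ` pos_eigs (W\<^sub>o\<^sub>u\<^sub>t * W\<^sub>i\<^sub>n))"
  shows "p_dominant n J\<^sub>T (1 - \<omega> - \<epsilon>) (size (Lambda_D \<omega> (W\<^sub>o\<^sub>u\<^sub>t * W\<^sub>i\<^sub>n)))
         \<and> size (Lambda_D \<omega> (W\<^sub>o\<^sub>u\<^sub>t * W\<^sub>i\<^sub>n)) \<le> d"
proof -
  (* Since the
     dimensions of pinv R are unknown (it is a definite description), those of W_out are read off
     from J_T being square. *)
  have "dim_col J\<^sub>T = dim_row J\<^sub>T" using inv unfolding invertible_mat_def by simp
  moreover have "dim_row J\<^sub>T = n" "dim_col J\<^sub>T = dim_col W\<^sub>o\<^sub>u\<^sub>t" unfolding JT using Win by simp_all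
  ultimately have W_out: "W\<^sub>o\<^sub>u\<^sub>t \<in> carrier_mat d n" unfolding carrier_mat_def by (simp add: Wout U_def)
  have K: "W\<^sub>i\<^sub>n * W\<^sub>o\<^sub>u\<^sub>t \<in> carrier_mat n n" using Win W_out by simp
  obtain S Y dk where "complex_diagonalization n (W\<^sub>i\<^sub>n * W\<^sub>o\<^sub>u\<^sub>t) S Y dk"
    using diagonalizable_shift[OF K] diag unfolding JT by blast
  then interpret complex_diagonalization n "W\<^sub>i\<^sub>n * W\<^sub>o\<^sub>u\<^sub>t" S Y dk .
  have size: "size (Lambda_D \<omega> (W\<^sub>o\<^sub>u\<^sub>t * W\<^sub>i\<^sub>n)) = card {k. k < n \<and> 0 < Re (dk k)}"
    unfolding size_Lambda_D by (rule sum_alg_mult_pos_eigs_swap[OF Win W_out refl])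
  have gap: "\<epsilon> < Re (dk k)" if "k < n" "0 < Re (dk k)" for k
  proof -
    have "Min (Re ` pos_eigs (W\<^sub>o\<^sub>u\<^sub>t * W\<^sub>i\<^sub>n)) \<le> Re (dk k)"
      using that by (intro Min_le) (auto simp: pos_eigs_swap[OF Win W_out refl])
    then show ?thesis using eps(2) by simp
  qed
  have "p_dominant n J\<^sub>T (1 - \<omega> - \<epsilon>) (card {k. k < n \<and> 0 < Re (dk k)})"
    using p_dominant_shift[OF eps(1) gap, of "-1 + \<omega>"] unfolding JT by simp
  moreover have "size (Lambda_D \<omega> (W\<^sub>o\<^sub>u\<^sub>t * W\<^sub>i\<^sub>n)) \<le> d"
    unfolding size_Lambda_D using Win W_out by (intro sum_alg_mult_pos_eigs_le) simp
  ultimately show ?thesis unfolding size by simp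
qed

end
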